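(* Let $A,B$ be non-trivial finitely generated left-orderable groups. Then $G=A*B$ is Hucha with respect to the family consisting of $A$, $B$ and all cyclic subgroups of $G$.
   Context: A positive cone is a subsemigroup $P$ with $G=P\sqcup P^{-1}\sqcup\{1\}$. For a finite generating set $X$ with word metric $d_X$, an $r$-path is a sequence $g_0,\dots,g_n$ with $d_X(g_i,g_{i+1})\le r$; $S$ $r$-disconnects $H_1,H_2$ if every $r$-path from $H_1$ to $H_2$ meets $S$, and $r$-disconnects $P$ if it $r$-disconnects $\{u\},\{v\}$ for some $u,v\in P$. A negative swamp of width $r$ for a subgroup $H$ is $S\subseteq P^{-1}$ that $r$-disconnects $P$ and $r$-disconnects $g_1H,g_2H$ for some $g_1,g_2\in G$. A finitely generated left-orderable group $G$ is Hucha with respect to a family $\mathcal{H}$ of subgroups if for some (equivalently any) finite generating set, for every positive cone $P$, every $H\in\mathcal{H}$ and every $r>0$ there is a negative swamp of width $r$ for $H$. *)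

theory Defs
  imports "HOL-Algebra.Algebra"
begin

definition left_orderable :: "('a, 'b) monoid_scheme \<Rightarrow> bool" where
  "left_orderable G \<longleftrightarrow> (\<exists>less :: 'a \<Rightarrow> 'a \<Rightarrow> bool.
     (\<forall>x\<in>carrier G. \<not> less x x) \<and>
     (\<forall>x\<in>carrier G. \<forall>y\<in>carrier G. \<forall>z\<in>carrier G. less x y \<and> less y z \<longrightarrow> less x z) \<and>
     (\<forall>x\<in>carrier G. \<forall>y\<in>carrier G. x = y \<or> less x y \<or> less y x) \<and>
     (\<forall>g\<in>carrier G. \<forall>x\<in>carrier G. \<forall>y\<in>carrier G. less x y \<longrightarrow> less (g \<otimes>\<^bsub>G\<^esub> x) (g \<otimes>\<^bsub>G\<^esub> y)))"

definition finitely_generated :: "('a, 'b) monoid_scheme \<Rightarrow> bool" where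
  "finitely_generated G \<longleftrightarrow> (\<exists>Xg. finite Xg \<and> Xg \<subseteq> carrier G \<and> generate G Xg = carrier G)"

definition positive_cone :: "('a, 'b) monoid_scheme \<Rightarrow> 'a set \<Rightarrow> bool" where
  "positive_cone G P \<longleftrightarrow> P \<subseteq> carrier G \<and>
     (\<forall>x\<in>P. \<forall>y\<in>P. x \<otimes>\<^bsub>G\<^esub> y \<in> P) \<and>
     carrier G = P \<union> (m_inv G ` P) \<union> {\<one>\<^bsub>G\<^esub>} \<and>
     P \<inter> (m_inv G ` P) = {} \<and> \<one>\<^bsub>G\<^esub> \<notin> P \<and> \<one>\<^bsub>G\<^esub> \<notin> m_inv G ` P"

definition word_length :: "('a, 'b) monoid_scheme \<Rightarrow> 'a set \<Rightarrow> 'a \<Rightarrow> nat" where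
  "word_length G Xg g = (LEAST n. \<exists>xs. length xs = n \<and> set xs \<subseteq> Xg \<union> m_inv G ` Xg \<and>
       foldr (\<otimes>\<^bsub>G\<^esub>) xs \<one>\<^bsub>G\<^esub> = g)"

definition word_dist :: "('a, 'b) monoid_scheme \<Rightarrow> 'a set \<Rightarrow> 'a \<Rightarrow> 'a \<Rightarrow> nat" where
  "word_dist G Xg g h = word_length G Xg (inv\<^bsub>G\<^esub> g \<otimes>\<^bsub>G\<^esub> h)"

definition r_path :: "('a, 'b) monoid_scheme \<Rightarrow> 'a set \<Rightarrow> nat \<Rightarrow> 'a list \<Rightarrow> bool" where
  "r_path G Xg r ps \<longleftrightarrow> ps \<noteq> [] \<and> set ps \<subseteq> carrier G \<and>
     (\<forall>i. Suc i < length ps \<longrightarrow> word_dist G Xg (ps ! i) (ps ! Suc i) \<le> r)"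

definition r_disconnects :: "('a, 'b) monoid_scheme \<Rightarrow> 'a set \<Rightarrow> nat \<Rightarrow> 'a set \<Rightarrow> 'a set \<Rightarrow> 'a set \<Rightarrow> bool" where
  "r_disconnects G Xg r S H1 H2 \<longleftrightarrow>
     (\<forall>ps. r_path G Xg r ps \<and> hd ps \<in> H1 \<and> last ps \<in> H2 \<longrightarrow> set ps \<inter> S \<noteq> {})"

definition r_disconnects_cone :: "('a, 'b) monoid_scheme \<Rightarrow> 'a set \<Rightarrow> nat \<Rightarrow> 'a set \<Rightarrow> 'a set \<Rightarrow> bool" where
  "r_disconnects_cone G Xg r S P \<longleftrightarrow> (\<exists>u\<in>P. \<exists>v\<in>P. r_disconnects G Xg r S {u} {v})"

definition negative_swamp :: "('a, 'b) monoid_scheme \<Rightarrow> 'a set \<Rightarrow> 'a set \<Rightarrow> 'a set \<Rightarrow> nat \<Rightarrow> 'a set \<Rightarrow> bool" where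
  "negative_swamp G Xg P H r S \<longleftrightarrow> S \<subseteq> m_inv G ` P \<and> r_disconnects_cone G Xg r S P \<and>
     (\<exists>g1\<in>carrier G. \<exists>g2\<in>carrier G. r_disconnects G Xg r S (g1 <#\<^bsub>G\<^esub> H) (g2 <#\<^bsub>G\<^esub> H))"

definition hucha :: "('a, 'b) monoid_scheme \<Rightarrow> 'a set set \<Rightarrow> bool" where
  "hucha G F \<longleftrightarrow> (\<exists>Xg. finite Xg \<and> Xg \<subseteq> carrier G \<and> generate G Xg = carrier G \<and>
     (\<forall>P. positive_cone G P \<longrightarrow> (\<forall>H\<in>F. \<forall>r::nat. r > 0 \<longrightarrow> (\<exists>S. negative_swamp G Xg P H r S))))"

text \<open>G is the (internal) free product of its subgroups A and B: A and B generate G and every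
  nonempty alternating word of nontrivial letters from A and B (label True = letter from A)
  has nontrivial product (normal form theorem).\<close>
definition internal_free_product :: "('a, 'b) monoid_scheme \<Rightarrow> 'a set \<Rightarrow> 'a set \<Rightarrow> bool" where
  "internal_free_product G A B \<longleftrightarrow> subgroup A G \<and> subgroup B G \<and>
     generate G (A \<union> B) = carrier G \<and>
     (\<forall>ws :: (bool \<times> 'a) list. ws \<noteq> [] \<longrightarrow>
        (\<forall>w\<in>set ws. snd w \<noteq> \<one>\<^bsub>G\<^esub> \<and> (if fst w then snd w \<in> A else snd w \<in> B)) \<longrightarrow>
        (\<forall>i. Suc i < length ws \<longrightarrow> fst (ws ! i) \<noteq> fst (ws ! Suc i)) \<longrightarrow>
        foldr (\<otimes>\<^bsub>G\<^esub>) (map snd ws) \<one>\<^bsub>G\<^esub> \<noteq> \<one>\<^bsub>G\<^esub>)"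

end

theory Submission
  imports Defs
begin

text \<open>
  Let \<open>T\<close> be the set of elements of \<open>G = A * B\<close> whose normal form starts with a syllable
  from \<open>A\<close>. With generators taken from \<open>A \<union> B\<close>, multiplying by a letter changes only the
  last syllable of a normal form, so a word path from \<open>c T\<close> to its complement passes through
  \<open>c\<close>; hence the word ball of radius \<open>R \<ge> r\<close> around \<open>c\<close> \<open>r\<close>-disconnects \<open>c T\<close> from its
  complement. If \<open>d\<close> lies above the ball of radius \<open>R\<close> around \<open>1\<close> in the order of a positive
  cone \<open>P\<close>, then the ball around \<open>c = d\<inverse>\<close> is negative, while both sides contain positive
  elements \<open>c u\<close> with \<open>d < u\<close>.

  If \<open>H\<close> is generated by elements of length at most \<open>R\<close>, the same crossing argument puts every
  coset \<open>x H\<close> that avoids the ball around \<open>1\<close> on one side, and left multiplication by a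
  syllable from the other factor moves it to the other side. By pigeonhole such cosets exist
  as soon as some element has no positive power in \<open>H\<close>: for \<open>H = A\<close> or \<open>B\<close> take a nontrivial
  element of the other factor (\<open>G\<close> is torsion-free and \<open>A \<inter> B = 1\<close>), and for cyclic \<open>H\<close> use
  that nontrivial elements of \<open>A\<close> and \<open>B\<close> do not commute.
\<close>

section \<open>Alternating lists and products in groups\<close>

fun alternating :: "(bool \<times> 'a \<Rightarrow> bool) \<Rightarrow> (bool \<times> 'a) list \<Rightarrow> bool" where
  "alternating P [] \<longleftrightarrow> True"
| "alternating P [w] \<longleftrightarrow> P w"
| "alternating P (w # v # ws) \<longleftrightarrow> P w \<and> fst w \<noteq> fst v \<and> alternating P (v # ws)"

lemma alternating_Cons:
  "alternating P (w # ws) \<longleftrightarrow> P w \<and> alternating P ws \<and> (ws \<noteq> [] \<longrightarrow> fst w \<noteq> fst (hd ws))"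
  by (cases ws) auto

lemma alternating_append:
  "alternating P (vs @ ws) \<longleftrightarrow> alternating P vs \<and> alternating P ws \<and>
     (vs \<noteq> [] \<longrightarrow> ws \<noteq> [] \<longrightarrow> fst (last vs) \<noteq> fst (hd ws))"
  by (induction vs) (auto simp: alternating_Cons)

lemma alternating_rev: "alternating P (rev ws) \<longleftrightarrow> alternating P ws"
  by (induction ws) (auto simp: alternating_Cons alternating_append last_rev hd_rev)

lemma alternating_map:
  assumes "alternating P ws" "\<And>w. P w \<Longrightarrow> Q (g w)" "\<And>w. fst (g w) = fst w"
  shows "alternating Q (map g ws)"
  using assms(1) by (induction ws) (auto simp: alternating_Cons hd_map assms(2,3))

lemma alternating_iff_nth:
  "alternating P ws \<longleftrightarrow> (\<forall>w\<in>set ws. P w) \<and> (\<forall>i. Suc i < length ws \<longrightarrow> fst (ws ! i) \<noteq> fst (ws ! Suc i))"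
proof (induction P ws rule: alternating.induct)
  case (3 P w v ws)
  have "(\<forall>i. Suc i < length (w # v # ws) \<longrightarrow> fst ((w # v # ws) ! i) \<noteq> fst ((w # v # ws) ! Suc i)) \<longleftrightarrow>
      fst w \<noteq> fst v \<and> (\<forall>i. Suc i < length (v # ws) \<longrightarrow> fst ((v # ws) ! i) \<noteq> fst ((v # ws) ! Suc i))"
    by (auto simp: All_less_Suc2 less_Suc_eq_0_disj)
  then show ?case using "3.IH" by auto
qed simp_all

lemma (in monoid) foldr_mult_closed:
  "set xs \<subseteq> carrier G \<Longrightarrow> foldr (\<otimes>) xs \<one> \<in> carrier G"
  by (induction xs) auto

lemma (in monoid) foldr_mult_append:
  "set xs \<subseteq> carrier G \<Longrightarrow> set ys \<subseteq> carrier G \<Longrightarrow>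
   foldr (\<otimes>) (xs @ ys) \<one> = foldr (\<otimes>) xs \<one> \<otimes> foldr (\<otimes>) ys \<one>"
  by (induction xs) (auto simp: m_assoc foldr_mult_closed)

lemma (in group) foldr_mult_rev_inv:
  "set xs \<subseteq> carrier G \<Longrightarrow> foldr (\<otimes>) (rev (map (m_inv G) xs)) \<one> = inv (foldr (\<otimes>) xs \<one>)"
proof (induction xs)
  case (Cons a xs)
  then show ?case
    using foldr_mult_append[of "rev (map (m_inv G) xs)" "[inv a]"]
    by (auto simp del: foldr_append simp: foldr_mult_closed inv_mult_group)
qed simp

lemma (in group) subgroup_nat_pow_closed: "subgroup H G \<Longrightarrow> h \<in> H \<Longrightarrow> h [^] (n::nat) \<in> H"
  using subgroup_int_pow_closed[of H h "int n"] by (simp add: int_pow_int)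

lemma (in group) l_coset_translate_back:
  assumes "c \<in> carrier G" "g \<in> carrier G" "H \<subseteq> carrier G" "x \<in> (c \<otimes> g) <# H"
  shows "inv c \<otimes> x \<in> g <# H"
  using assms unfolding l_coset_def by (auto simp: m_assoc[symmetric] subset_iff)

lemma (in group) coset_avoiding_finite_set:
  assumes H: "subgroup H G" and K: "finite K" and x: "x \<in> carrier G"
    and no_power: "\<And>n. x [^] Suc n \<notin> H"
  shows "\<exists>g\<in>carrier G. (g <# H) \<inter> K = {}"
proof (rule ccontr)
  assume "\<not> ?thesis"
  then have "\<forall>i::nat. \<exists>h\<in>H. x [^] i \<otimes> h \<in> K"
    using x unfolding l_coset_def by blast
  then obtain h where h: "\<And>i::nat. h i \<in> H" "\<And>i. x [^] i \<otimes> h i \<in> K"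
    by metis
  let ?phi = "\<lambda>i::nat. x [^] i \<otimes> h i"
  \<comment> \<open>by pigeonhole two cosets \<open>x [^] i <# H\<close> meet \<open>K\<close> in the same point\<close>
  have "\<not> inj_on ?phi {0..card K}"
  proof
    assume "inj_on ?phi {0..card K}"
    then have "card {0..card K} \<le> card K"
      using card_inj_on_le[OF _ _ K] h(2) by blast
    then show False
      by simp
  qed
  then obtain i j where ij: "i < j" "?phi i = ?phi j"
    unfolding inj_on_def by (metis linorder_neqE_nat)
  have h_closed: "h i \<in> carrier G" "h j \<in> carrier G"
    using h(1) subgroup.mem_carrier[OF H] by auto
  have "x [^] i \<otimes> h i = x [^] i \<otimes> (x [^] (j - i) \<otimes> h j)"
    using ij x h_closed nat_pow_mult[OF x, of i "j - i"] by (simp add: m_assoc[symmetric])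
  then have "h i = x [^] (j - i) \<otimes> h j"
    using l_cancel x h_closed by blast
  then have "x [^] (j - i) = h i \<otimes> inv (h j)"
    using inv_solve_right[of "x [^] (j - i)" "h i" "h j"] x h_closed by simp
  also have "\<dots> \<in> H"
    using h(1) subgroup.m_closed[OF H] subgroup.m_inv_closed[OF H] by blast
  moreover have "j - i = Suc (j - i - 1)"
    using ij(1) by simp
  ultimately show False
    using no_power[of "j - i - 1"] by metis
qed

lemma (in group) l_coset_generate_subset:
  assumes Y: "Y \<subseteq> carrier G" and x: "x \<in> carrier G" "x \<in> S"
    and step: "\<And>h y. h \<in> generate G Y \<Longrightarrow> y \<in> Y \<union> m_inv G ` Y \<Longrightarrow> x \<otimes> h \<in> S \<Longrightarrow>
      x \<otimes> h \<otimes> y \<in> S"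
  shows "x <# generate G Y \<subseteq> S"
proof -
  let ?H = "generate G Y"
  have H: "subgroup ?H G"
    using generate_is_subgroup[OF Y] .
  have "\<forall>h0\<in>?H. x \<otimes> h0 \<in> S \<longrightarrow> x \<otimes> h0 \<otimes> h \<in> S" if "h \<in> ?H" for h
    using that
  proof (induction rule: generate.induct)
    case one
    then show ?case
      using x subgroup.mem_carrier[OF H] by simp
  next
    case (incl y)
    then show ?case
      using step by blast
  next
    case (inv y)
    then show ?case
      using step by blast
  next
    case (eng h1 h2)
    show ?case
    proof (intro ballI impI)
      fix h0
      assume "h0 \<in> ?H" "x \<otimes> h0 \<in> S"
      then have "x \<otimes> h0 \<otimes> h1 \<in> S"
        using eng.IH(1) by blast
      moreover have "x \<otimes> h0 \<otimes> h1 = x \<otimes> (h0 \<otimes> h1)"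
        using x \<open>h0 \<in> ?H\<close> eng.hyps subgroup.mem_carrier[OF H] by (simp add: m_assoc)
      moreover have "h0 \<otimes> h1 \<in> ?H"
        using subgroup.m_closed[OF H \<open>h0 \<in> ?H\<close> eng.hyps(1)] .
      ultimately have "x \<otimes> (h0 \<otimes> h1) \<otimes> h2 \<in> S"
        using eng.IH(2) by metis
      then show "x \<otimes> h0 \<otimes> (h1 \<otimes> h2) \<in> S"
        using x \<open>h0 \<in> ?H\<close> eng.hyps subgroup.mem_carrier[OF H] by (simp add: m_assoc)
    qed
  qed
  then have "x \<otimes> \<one> \<otimes> h \<in> S" if "h \<in> ?H" for h
    using that subgroup.one_closed[OF H] x by (metis r_one)
  then show ?thesis
    using x unfolding l_coset_def by auto
qed

section \<open>Normal forms in a free product\<close>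

locale free_product_group = group G for G :: "'a monoid" (structure) +
  fixes A B :: "'a set"
  assumes internal_free_product: "internal_free_product G A B"
begin

definition factor :: "bool \<Rightarrow> 'a set" where
  "factor f = (if f then A else B)"

definition syllable :: "bool \<times> 'a \<Rightarrow> bool" where
  "syllable w \<longleftrightarrow> snd w \<noteq> \<one> \<and> snd w \<in> factor (fst w)"

abbreviation reduced :: "(bool \<times> 'a) list \<Rightarrow> bool" where
  "reduced \<equiv> alternating syllable"

definition word_prod :: "(bool \<times> 'a) list \<Rightarrow> 'a" where
  "word_prod ws = foldr (\<otimes>) (map snd ws) \<one>"

definition word_inv :: "(bool \<times> 'a) list \<Rightarrow> (bool \<times> 'a) list" where
  "word_inv ws = rev (map (\<lambda>w. (fst w, inv (snd w))) ws)"

definition starts_in :: "bool \<Rightarrow> 'a set" where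
  "starts_in f = {x. \<exists>ws. ws \<noteq> [] \<and> reduced ws \<and> fst (hd ws) = f \<and> word_prod ws = x}"

lemma subgroup_A: "subgroup A G" and subgroup_B: "subgroup B G"
  and generate_A_B: "generate G (A \<union> B) = carrier G"
  using internal_free_product unfolding internal_free_product_def by auto

lemma subgroup_factor: "subgroup (factor f) G"
  using subgroup_A subgroup_B by (simp add: factor_def)

lemma factor_closed: "a \<in> factor f \<Longrightarrow> a \<in> carrier G"
  using subgroup.mem_carrier[OF subgroup_factor] .

lemma union_factors: "A \<union> B = factor True \<union> factor False"
  by (simp add: factor_def)

lemma reduced_carrier: "reduced ws \<Longrightarrow> set (map snd ws) \<subseteq> carrier G"
  by (auto simp: alternating_iff_nth syllable_def dest: factor_closed)

lemma word_prod_Nil [simp]: "word_prod [] = \<one>"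
  and word_prod_Cons [simp]: "word_prod (w # ws) = snd w \<otimes> word_prod ws"
  by (simp_all add: word_prod_def)

lemma word_prod_closed: "set (map snd ws) \<subseteq> carrier G \<Longrightarrow> word_prod ws \<in> carrier G"
  unfolding word_prod_def by (rule foldr_mult_closed)

lemma word_prod_append:
  "set (map snd vs) \<subseteq> carrier G \<Longrightarrow> set (map snd ws) \<subseteq> carrier G \<Longrightarrow>
   word_prod (vs @ ws) = word_prod vs \<otimes> word_prod ws"
  unfolding word_prod_def map_append by (rule foldr_mult_append)

lemma reduced_word_prod_neq_one:
  assumes "ws \<noteq> []" "reduced ws"
  shows "word_prod ws \<noteq> \<one>"
proof -
  have normal_form: "ws \<noteq> [] \<longrightarrow>
      (\<forall>w\<in>set ws. snd w \<noteq> \<one> \<and> (if fst w then snd w \<in> A else snd w \<in> B)) \<longrightarrow>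
      (\<forall>i. Suc i < length ws \<longrightarrow> fst (ws ! i) \<noteq> fst (ws ! Suc i)) \<longrightarrow>
      foldr (\<otimes>) (map snd ws) \<one> \<noteq> \<one>"
    using internal_free_product unfolding internal_free_product_def by blast
  have "\<forall>w\<in>set ws. snd w \<noteq> \<one> \<and> (if fst w then snd w \<in> A else snd w \<in> B)"
    using assms(2) unfolding alternating_iff_nth syllable_def factor_def by auto
  moreover have "\<forall>i. Suc i < length ws \<longrightarrow> fst (ws ! i) \<noteq> fst (ws ! Suc i)"
    using assms(2) unfolding alternating_iff_nth by simp
  ultimately show ?thesis
    using assms(1) normal_form unfolding word_prod_def by blast
qed

lemma reduced_word_inv: "reduced ws \<Longrightarrow> reduced (word_inv ws)"
  unfolding word_inv_def alternating_rev
  by (rule alternating_map[where P = syllable])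
     (auto simp: syllable_def subgroup.m_inv_closed[OF subgroup_factor] dest: factor_closed)

lemma word_prod_word_inv:
  assumes "set (map snd ws) \<subseteq> carrier G"
  shows "word_prod (word_inv ws) = inv (word_prod ws)"
proof -
  have "map snd (word_inv ws) = rev (map (m_inv G) (map snd ws))"
    by (simp add: word_inv_def rev_map)
  then show ?thesis
    using foldr_mult_rev_inv[OF assms] by (simp add: word_prod_def)
qed

lemma starts_inI: "ws \<noteq> [] \<Longrightarrow> reduced ws \<Longrightarrow> fst (hd ws) = f \<Longrightarrow> word_prod ws \<in> starts_in f"
  unfolding starts_in_def by blast

lemma starts_inE:
  assumes "x \<in> starts_in f"
  obtains ws where "ws \<noteq> []" "reduced ws" "fst (hd ws) = f" "word_prod ws = x"
  using assms unfolding starts_in_def by blast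

lemma starts_in_closed: "x \<in> starts_in f \<Longrightarrow> x \<in> carrier G"
  by (auto elim!: starts_inE intro!: word_prod_closed reduced_carrier)

lemma starts_in_unique:
  assumes "x \<in> starts_in f" "x \<in> starts_in g"
  shows "f = g"
proof (rule ccontr)
  assume "f \<noteq> g"
  obtain vs ws where vs: "vs \<noteq> []" "reduced vs" "fst (hd vs) = f" "word_prod vs = x"
    and ws: "ws \<noteq> []" "reduced ws" "fst (hd ws) = g" "word_prod ws = x"
    using assms by (metis starts_inE)
  have carrier: "set (map snd vs) \<subseteq> carrier G" "set (map snd (word_inv vs)) \<subseteq> carrier G"
    "set (map snd ws) \<subseteq> carrier G"
    using vs(2) ws(2) reduced_carrier reduced_word_inv by blast+
  have "reduced (word_inv vs @ ws)"
    using vs ws \<open>f \<noteq> g\<close> reduced_word_inv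
    by (simp add: alternating_append word_inv_def last_rev hd_map)
  moreover have "word_prod (word_inv vs @ ws) = \<one>"
    using vs(4) ws(4) carrier word_prod_closed[OF carrier(1)]
    by (simp add: word_prod_append word_prod_word_inv)
  ultimately show False
    using reduced_word_prod_neq_one ws(1) by blast
qed

lemma starts_in_syllable: "a \<in> factor f \<Longrightarrow> a \<noteq> \<one> \<Longrightarrow> a \<in> starts_in f"
  using starts_inI[of "[(f, a)]" f] by (simp add: syllable_def factor_closed)

lemma starts_in_mult_left:
  assumes "y \<in> starts_in (\<not> f)" "a \<in> factor f" "a \<noteq> \<one>"
  shows "a \<otimes> y \<in> starts_in f"
proof -
  obtain ws where ws: "ws \<noteq> []" "reduced ws" "fst (hd ws) = (\<not> f)" "word_prod ws = y"
    using assms(1) by (rule starts_inE)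
  have "reduced ((f, a) # ws)"
    using ws assms(2,3) by (simp add: alternating_Cons syllable_def)
  with ws show ?thesis
    using starts_inI[of "(f, a) # ws" f] by simp
qed

lemma starts_in_snoc:
  assumes ws: "reduced ws" and a: "a \<in> factor g" and ne: "word_prod ws \<otimes> a \<noteq> \<one>"
    and cons: "ws \<noteq> [] \<Longrightarrow> fst (hd ws) = f \<and> fst (last ws) \<noteq> g"
    and nil: "ws = [] \<Longrightarrow> g = f"
  shows "word_prod ws \<otimes> a \<in> starts_in f"
proof (cases "a = \<one>")
  case True
  then have "ws \<noteq> []"
    using ne by auto
  then show ?thesis
    using True ws cons reduced_carrier word_prod_closed starts_inI by simp
next
  case False
  let ?vs = "ws @ [(g, a)]"
  have "reduced ?vs"
    using ws a cons False by (auto simp: alternating_append syllable_def)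
  moreover have "fst (hd ?vs) = f"
    using cons nil by (cases ws) auto
  moreover have "word_prod ?vs = word_prod ws \<otimes> a"
    using ws a reduced_carrier factor_closed by (simp add: word_prod_append)
  ultimately show ?thesis
    using starts_inI[of ?vs f] by simp
qed

lemma starts_in_mult_right:
  assumes x: "x \<in> starts_in f" and a: "a \<in> factor g" and ne: "x \<otimes> a \<noteq> \<one>"
  shows "x \<otimes> a \<in> starts_in f"
proof -
  obtain ws where ws: "ws \<noteq> []" "reduced ws" "fst (hd ws) = f" "word_prod ws = x"
    using x by (rule starts_inE)
  show ?thesis
  proof (cases "fst (last ws) = g")
    case False
    then show ?thesis
      using starts_in_snoc[of ws a g f] ws a ne by simp
  next
    case True
    then obtain vs b where split: "ws = vs @ [(g, b)]"
      using ws(1) by (cases ws rule: rev_cases) auto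
    have vs: "reduced vs" "vs \<noteq> [] \<Longrightarrow> fst (last vs) \<noteq> g" and b: "b \<in> factor g"
      using ws(2) unfolding split by (auto simp: alternating_append syllable_def)
    have "word_prod vs \<in> carrier G"
      using vs(1) reduced_carrier word_prod_closed by blast
    moreover have "x = word_prod vs \<otimes> b"
      using ws(4) vs(1) b reduced_carrier factor_closed by (simp add: split word_prod_append)
    ultimately have "x \<otimes> a = word_prod vs \<otimes> (b \<otimes> a)"
      using a b factor_closed by (simp add: m_assoc)
    moreover have "b \<otimes> a \<in> factor g"
      using subgroup.m_closed[OF subgroup_factor b a] .
    moreover have "vs \<noteq> [] \<Longrightarrow> fst (hd vs) = f" and "vs = [] \<Longrightarrow> g = f"
      using ws(3) split by auto
    ultimately show ?thesis
      using starts_in_snoc[of vs "b \<otimes> a" g f] vs ne by auto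
  qed
qed

lemma one_or_starts_in_mult:
  assumes y: "y \<in> insert \<one> (starts_in True \<union> starts_in False)" and "a \<in> A \<union> B"
  shows "y \<otimes> a \<in> insert \<one> (starts_in True \<union> starts_in False)"
proof -
  obtain g where a: "a \<in> factor g"
    using \<open>a \<in> A \<union> B\<close> union_factors by blast
  then have "a \<in> carrier G"
    by (rule factor_closed)
  show ?thesis
  proof (cases "y = \<one>")
    case True
    then show ?thesis
      using starts_in_syllable[OF a] \<open>a \<in> carrier G\<close> by (cases g) auto
  next
    case False
    then obtain f where "y \<in> starts_in f"
      using y by blast
    then show ?thesis
      using starts_in_mult_right[OF _ a] by (cases f; cases "y \<otimes> a = \<one>") auto
  qed
qed

lemma nontrivial_starts_in:
  assumes "x \<in> carrier G" "x \<noteq> \<one>"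
  shows "\<exists>f. x \<in> starts_in f"
proof -
  let ?Q = "insert \<one> (starts_in True \<union> starts_in False)"
  have "\<forall>y\<in>?Q. y \<otimes> h \<in> ?Q" if "h \<in> generate G (A \<union> B)" for h
    using that
  proof (induction rule: generate.induct)
    case one
    then show ?case
      using starts_in_closed by auto
  next
    case (incl h)
    then show ?case
      using one_or_starts_in_mult by blast
  next
    case (inv h)
    then have "inv h \<in> A \<union> B"
      using subgroup.m_inv_closed[OF subgroup_A] subgroup.m_inv_closed[OF subgroup_B] by blast
    then show ?case
      using one_or_starts_in_mult by blast
  next
    case (eng h1 h2)
    have "h1 \<in> carrier G" "h2 \<in> carrier G"
      using eng.hyps generate_A_B by auto
    show ?case
    proof
      fix y
      assume "y \<in> ?Q"
      then have "y \<otimes> h1 \<in> ?Q"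
        using eng.IH(1) by blast
      then have "(y \<otimes> h1) \<otimes> h2 \<in> ?Q"
        using eng.IH(2) by blast
      moreover have "y \<in> carrier G"
        using \<open>y \<in> ?Q\<close> starts_in_closed by blast
      ultimately show "y \<otimes> (h1 \<otimes> h2) \<in> ?Q"
        using \<open>h1 \<in> carrier G\<close> \<open>h2 \<in> carrier G\<close> by (simp add: m_assoc)
    qed
  qed
  then have "\<one> \<otimes> x \<in> ?Q"
    using assms(1) generate_A_B by blast
  then show ?thesis
    using assms by auto
qed

lemma factors_inter: "A \<inter> B = {\<one>}"
  using starts_in_syllable[of _ True] starts_in_syllable[of _ False] starts_in_unique
    subgroup.one_closed[OF subgroup_A] subgroup.one_closed[OF subgroup_B]
  by (fastforce simp: factor_def)

lemma factor_elements_not_commute: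
  assumes a: "a \<in> A" "a \<noteq> \<one>" and b: "b \<in> B" "b \<noteq> \<one>"
  shows "a \<otimes> b \<noteq> b \<otimes> a"
proof
  assume comm: "a \<otimes> b = b \<otimes> a"
  have carrier: "a \<in> carrier G" "b \<in> carrier G"
    using a(1) b(1) subgroup.mem_carrier[OF subgroup_A] subgroup.mem_carrier[OF subgroup_B] by auto
  let ?ws = "[(True, a), (False, b), (True, inv a), (False, inv b)]"
  have "reduced ?ws"
    using a b carrier subgroup.m_inv_closed[OF subgroup_A] subgroup.m_inv_closed[OF subgroup_B]
    by (simp add: syllable_def factor_def)
  moreover have "word_prod ?ws = (a \<otimes> b) \<otimes> inv a \<otimes> inv b"
    using carrier by (simp add: m_assoc)
  then have "word_prod ?ws = \<one>"
    using carrier by (simp add: comm m_assoc)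
  ultimately show False
    using reduced_word_prod_neq_one by blast
qed

lemma generate_factor_generators:
  assumes "XA \<subseteq> A" "generate G XA = A" "XB \<subseteq> B" "generate G XB = B"
  shows "generate G (XA \<union> XB) = carrier G"
proof -
  have closed: "XA \<union> XB \<subseteq> carrier G"
    using assms(1,3) subgroup.subset[OF subgroup_A] subgroup.subset[OF subgroup_B] by blast
  have "A \<union> B \<subseteq> generate G (XA \<union> XB)"
    using mono_generate[of XA "XA \<union> XB"] mono_generate[of XB "XA \<union> XB"] assms(2,4) by auto
  then have "generate G (A \<union> B) \<subseteq> generate G (XA \<union> XB)"
    using generate_subgroup_incl generate_is_subgroup[OF closed] by blast
  then show ?thesis
    using generate_A_B generate_incl[OF closed] by blast
qed

end

section \<open>Word metric\<close>

locale word_metric = group G for G :: "'a monoid" (structure) +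
  fixes Xg :: "'a set"
  assumes finite_Xg: "finite Xg" and Xg_closed: "Xg \<subseteq> carrier G"
    and generate_Xg: "generate G Xg = carrier G"
begin

abbreviation letters :: "'a set" where
  "letters \<equiv> Xg \<union> m_inv G ` Xg"

abbreviation len :: "'a \<Rightarrow> nat" where
  "len \<equiv> word_length G Xg"

definition word_ball :: "'a \<Rightarrow> nat \<Rightarrow> 'a set" where
  "word_ball c R = {z \<in> carrier G. word_dist G Xg z c \<le> R}"

lemma letters_closed: "letters \<subseteq> carrier G"
  using Xg_closed by auto

lemma letters_inv_closed: "y \<in> letters \<Longrightarrow> inv y \<in> letters"
  using Xg_closed by (force simp: subset_iff)

lemma word_exists:
  assumes "x \<in> carrier G"
  shows "\<exists>xs. set xs \<subseteq> letters \<and> foldr (\<otimes>) xs \<one> = x"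
proof -
  have "x \<in> generate G Xg"
    using assms generate_Xg by simp
  then show ?thesis
  proof (induction rule: generate.induct)
    case one
    then show ?case by (intro exI[of _ "[]"]) simp
  next
    case (incl h)
    then show ?case using Xg_closed by (intro exI[of _ "[h]"]) auto
  next
    case (inv h)
    then show ?case using Xg_closed by (intro exI[of _ "[inv h]"]) auto
  next
    case (eng h1 h2)
    then obtain xs1 xs2 where "set xs1 \<subseteq> letters" "foldr (\<otimes>) xs1 \<one> = h1"
      and "set xs2 \<subseteq> letters" "foldr (\<otimes>) xs2 \<one> = h2"
      by blast
    then show ?case
      using foldr_mult_append[of xs1 xs2] letters_closed
      by (intro exI[of _ "xs1 @ xs2"]) (auto simp del: foldr_append)
  qed
qed

lemma word_length_witness:
  assumes "x \<in> carrier G"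
  obtains xs where "length xs = len x" "set xs \<subseteq> letters" "foldr (\<otimes>) xs \<one> = x"
proof -
  have "\<exists>n xs. length xs = n \<and> set xs \<subseteq> letters \<and> foldr (\<otimes>) xs \<one> = x"
    using word_exists[OF assms] by blast
  then have "\<exists>xs. length xs = len x \<and> set xs \<subseteq> letters \<and> foldr (\<otimes>) xs \<one> = x"
    unfolding word_length_def by (rule LeastI_ex)
  then show ?thesis
    using that by blast
qed

lemma word_length_le: "set xs \<subseteq> letters \<Longrightarrow> len (foldr (\<otimes>) xs \<one>) \<le> length xs"
  unfolding word_length_def by (rule Least_le) blast

lemma word_length_one: "len \<one> = 0"
  using word_length_le[of "[]"] by simp

lemma word_length_letter: "y \<in> letters \<Longrightarrow> len y \<le> 1"
  using word_length_le[of "[y]"] letters_closed by auto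

lemma word_length_inv_le:
  assumes "x \<in> carrier G"
  shows "len (inv x) \<le> len x"
proof -
  obtain xs where xs: "length xs = len x" "set xs \<subseteq> letters" "foldr (\<otimes>) xs \<one> = x"
    using word_length_witness[OF assms] .
  have "set (rev (map (m_inv G) xs)) \<subseteq> letters"
    using xs(2) letters_inv_closed by auto
  moreover have "foldr (\<otimes>) (rev (map (m_inv G) xs)) \<one> = inv x"
    using foldr_mult_rev_inv xs(2,3) letters_closed by blast
  ultimately show ?thesis
    using word_length_le xs(1) by fastforce
qed

lemma word_length_inv: "x \<in> carrier G \<Longrightarrow> len (inv x) = len x"
  using word_length_inv_le[of x] word_length_inv_le[of "inv x"] by simp

lemma word_dist_mult: "p \<in> carrier G \<Longrightarrow> t \<in> carrier G \<Longrightarrow> word_dist G Xg p (p \<otimes> t) = len t"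
  unfolding word_dist_def by (simp add: m_assoc[symmetric])

lemma finite_length_le: "finite {x \<in> carrier G. len x \<le> R}"
proof -
  have "{x \<in> carrier G. len x \<le> R} \<subseteq> (\<lambda>xs. foldr (\<otimes>) xs \<one>) ` {xs. set xs \<subseteq> letters \<and> length xs \<le> R}"
    by (force elim: word_length_witness)
  moreover have "finite {xs. set xs \<subseteq> letters \<and> length xs \<le> R}"
    using finite_Xg by (intro finite_lists_length_le) auto
  ultimately show ?thesis
    using finite_subset by blast
qed

lemma finite_word_ball:
  assumes "c \<in> carrier G"
  shows "finite (word_ball c R)"
proof -
  have "word_ball c R \<subseteq> (\<lambda>k. c \<otimes> inv k) ` {k \<in> carrier G. len k \<le> R}"
  proof
    fix z
    assume z: "z \<in> word_ball c R"
    then have "z \<in> carrier G"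
      by (simp add: word_ball_def)
    then have "z = c \<otimes> inv (inv z \<otimes> c)"
      using assms by (simp add: inv_mult_group m_assoc[symmetric])
    then show "z \<in> (\<lambda>k. c \<otimes> inv k) ` {k \<in> carrier G. len k \<le> R}"
      using z assms \<open>z \<in> carrier G\<close> unfolding word_ball_def word_dist_def by blast
  qed
  then show ?thesis
    using finite_length_le finite_subset by blast
qed

lemma one_in_word_ball: "\<one> \<in> word_ball \<one> R"
  by (simp add: word_ball_def word_dist_def word_length_one)

end

section \<open>Separation by word balls\<close>

lemma r_path_Cons_Cons:
  "r_path G Xg r (p # q # ps) \<longleftrightarrow> word_dist G Xg p q \<le> r \<and> p \<in> carrier G \<and> r_path G Xg r (q # ps)"
  unfolding r_path_def by (auto simp: All_less_Suc2 less_Suc_eq_0_disj)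

locale free_product_word_metric = free_product_group G A B + word_metric G Xg
  for G :: "'a monoid" (structure) and A B Xg +
  assumes Xg_factors: "Xg \<subseteq> A \<union> B"
begin

lemma letters_factors: "letters \<subseteq> A \<union> B"
  using Xg_factors subgroup.m_inv_closed[OF subgroup_A] subgroup.m_inv_closed[OF subgroup_B] by auto

text \<open>A letter lies in \<open>A\<close> or \<open>B\<close>, so right multiplication by it changes only the last
  syllable: the first syllable can change only after the path has passed through \<open>1\<close>.\<close>

lemma word_from_starts_in_stays_or_hits_one:
  assumes "z \<in> starts_in f" "set xs \<subseteq> letters"
  shows "z \<otimes> foldr (\<otimes>) xs \<one> \<in> starts_in f \<or> (\<exists>k \<le> length xs. z \<otimes> foldr (\<otimes>) (take k xs) \<one> = \<one>)"
  using assms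
proof (induction xs arbitrary: z)
  case Nil
  then show ?case
    using starts_in_closed by simp
next
  case (Cons s xs)
  have "set (s # xs) \<subseteq> carrier G"
    using Cons.prems(2) letters_closed by (rule subset_trans)
  then have closed: "z \<in> carrier G" "s \<in> carrier G" "set xs \<subseteq> carrier G"
    using Cons.prems(1) starts_in_closed by auto
  show ?case
  proof (cases "z \<otimes> s = \<one>")
    case True
    then show ?thesis
      using closed by (intro disjI2 exI[of _ 1]) auto
  next
    case False
    obtain g where "s \<in> factor g"
      using Cons.prems(2) letters_factors union_factors by auto
    then have "z \<otimes> s \<in> starts_in f"
      using starts_in_mult_right Cons.prems(1) False by blast
    then have "z \<otimes> s \<otimes> foldr (\<otimes>) xs \<one> \<in> starts_in f \<or>
        (\<exists>k \<le> length xs. z \<otimes> s \<otimes> foldr (\<otimes>) (take k xs) \<one> = \<one>)"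
      using Cons.IH Cons.prems(2) by simp
    then show ?thesis
    proof
      assume "z \<otimes> s \<otimes> foldr (\<otimes>) xs \<one> \<in> starts_in f"
      then show ?thesis
        using closed foldr_mult_closed[OF closed(3)] by (simp add: m_assoc)
    next
      assume "\<exists>k \<le> length xs. z \<otimes> s \<otimes> foldr (\<otimes>) (take k xs) \<one> = \<one>"
      then obtain k where k: "k \<le> length xs" "z \<otimes> s \<otimes> foldr (\<otimes>) (take k xs) \<one> = \<one>"
        by blast
      have "foldr (\<otimes>) (take k xs) \<one> \<in> carrier G"
        using closed(3) by (meson foldr_mult_closed set_take_subset subset_trans)
      then show ?thesis
        using k closed by (intro disjI2 exI[of _ "Suc k"]) (simp add: m_assoc)
    qed
  qed
qed

lemma word_dist_le_crossing:
  assumes c: "c \<in> carrier G" and x: "x \<in> carrier G" and y: "y \<in> carrier G"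
    and inside: "inv c \<otimes> x \<in> starts_in f" and outside: "inv c \<otimes> y \<notin> starts_in f"
  shows "word_dist G Xg x c \<le> word_dist G Xg x y"
proof -
  obtain xs where xs: "length xs = word_dist G Xg x y" "set xs \<subseteq> letters"
    "foldr (\<otimes>) xs \<one> = inv x \<otimes> y"
    using word_length_witness[of "inv x \<otimes> y"] x y unfolding word_dist_def by auto
  have "x \<otimes> (inv x \<otimes> y) = y"
    using x y by (simp add: m_assoc[symmetric])
  then have "inv c \<otimes> x \<otimes> (inv x \<otimes> y) = inv c \<otimes> y"
    using c x y by (simp add: m_assoc)
  then obtain k where k: "k \<le> length xs" "inv c \<otimes> x \<otimes> foldr (\<otimes>) (take k xs) \<one> = \<one>"
    using word_from_starts_in_stays_or_hits_one[OF inside xs(2)] xs(3) outside by auto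
  have "set (take k xs) \<subseteq> letters"
    using xs(2) by (meson set_take_subset subset_trans)
  moreover have "foldr (\<otimes>) (take k xs) \<one> = inv x \<otimes> c"
  proof -
    have "foldr (\<otimes>) (take k xs) \<one> \<in> carrier G"
      using foldr_mult_closed calculation letters_closed by blast
    then have "foldr (\<otimes>) (take k xs) \<one> = inv (inv c \<otimes> x)"
      using k(2) c x inv_equality[of "foldr (\<otimes>) (take k xs) \<one>" "inv c \<otimes> x"]
      by (metis inv_closed inv_comm m_closed)
    then show ?thesis
      using c x by (simp add: inv_mult_group)
  qed
  ultimately have "word_dist G Xg x c \<le> length (take k xs)"
    unfolding word_dist_def by (metis word_length_le)
  then show ?thesis
    using xs(1) k(1) by simp
qed

lemma r_path_crossing_meets_word_ball:
  assumes c: "c \<in> carrier G" and "r \<le> R"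
  shows "r_path G Xg r ps \<Longrightarrow> inv c \<otimes> hd ps \<in> starts_in f \<Longrightarrow> inv c \<otimes> last ps \<notin> starts_in f \<Longrightarrow>
    set ps \<inter> word_ball c R \<noteq> {}"
proof (induction ps rule: induct_list012)
  case (3 p q ps)
  have step: "word_dist G Xg p q \<le> r" "p \<in> carrier G" "r_path G Xg r (q # ps)"
    using "3.prems"(1) by (simp_all add: r_path_Cons_Cons)
  then have "q \<in> carrier G"
    by (simp add: r_path_def)
  show ?case
  proof (cases "inv c \<otimes> q \<in> starts_in f")
    case True
    then show ?thesis
      using "3.IH"(2) step(3) "3.prems"(3) by auto
  next
    case False
    then have "word_dist G Xg p c \<le> word_dist G Xg p q"
      using word_dist_le_crossing[OF c step(2) \<open>q \<in> carrier G\<close>] "3.prems"(2) by simp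
    then have "p \<in> word_ball c R"
      using step(1,2) \<open>r \<le> R\<close> by (simp add: word_ball_def)
    then show ?thesis
      by auto
  qed
qed (auto simp: r_path_def)

lemma word_ball_r_disconnects:
  assumes "c \<in> carrier G" "r \<le> R"
    and "\<forall>x\<in>H1. inv c \<otimes> x \<in> starts_in f" "\<forall>y\<in>H2. inv c \<otimes> y \<notin> starts_in f"
  shows "r_disconnects G Xg r (word_ball c R) H1 H2"
  unfolding r_disconnects_def
  using r_path_crossing_meets_word_ball[OF assms(1,2)] assms(3,4) by blast

lemma starts_in_mult_off_word_ball:
  assumes p: "p \<in> starts_in f" "p \<notin> word_ball \<one> R" and t: "t \<in> carrier G" "len t \<le> R"
  shows "p \<otimes> t \<in> starts_in f"
proof (rule ccontr)
  have "p \<in> carrier G"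
    using p(1) by (rule starts_in_closed)
  moreover assume "p \<otimes> t \<notin> starts_in f"
  ultimately have "word_dist G Xg p \<one> \<le> word_dist G Xg p (p \<otimes> t)"
    using word_dist_le_crossing[of \<one> p "p \<otimes> t" f] p(1) t(1) by simp
  then have "p \<in> word_ball \<one> R"
    using \<open>p \<in> carrier G\<close> t word_dist_mult[of p t] by (simp add: word_ball_def)
  with p(2) show False ..
qed

lemma coset_within_starts_in:
  assumes Y: "Y \<subseteq> carrier G" "\<forall>y\<in>Y. len y \<le> R" and x: "x \<in> carrier G"
    and avoid: "(x <# generate G Y) \<inter> word_ball \<one> R = {}"
  shows "\<exists>f. x <# generate G Y \<subseteq> starts_in f"
proof -
  have coset: "x \<otimes> h \<in> x <# generate G Y" if "h \<in> generate G Y" for h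
    using that unfolding l_coset_def by blast
  have "x \<notin> word_ball \<one> R"
    using avoid coset[OF generate.one] x by auto
  then obtain f where f: "x \<in> starts_in f"
    using nontrivial_starts_in[OF x] one_in_word_ball by blast
  have "x <# generate G Y \<subseteq> starts_in f"
  proof (rule l_coset_generate_subset[OF Y(1) x f])
    fix h y
    assume h: "h \<in> generate G Y" and y: "y \<in> Y \<union> m_inv G ` Y" and xh: "x \<otimes> h \<in> starts_in f"
    have "x \<otimes> h \<notin> word_ball \<one> R"
      using avoid coset[OF h] by blast
    moreover have "y \<in> carrier G" "len y \<le> R"
      using y Y word_length_inv by auto
    ultimately show "x \<otimes> h \<otimes> y \<in> starts_in f"
      using starts_in_mult_off_word_ball[OF xh] by blast
  qed
  then show ?thesis ..
qed

end

section \<open>Positive cones\<close>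

locale positive_cone_group = group G for G :: "'a monoid" (structure) +
  fixes P :: "'a set"
  assumes positive_cone: "positive_cone G P"
begin

definition cone_less :: "'a \<Rightarrow> 'a \<Rightarrow> bool" (infix "<\<^sub>P" 50) where
  "x <\<^sub>P y \<longleftrightarrow> inv x \<otimes> y \<in> P"

lemma cone_closed: "P \<subseteq> carrier G"
  and cone_mult: "p \<in> P \<Longrightarrow> q \<in> P \<Longrightarrow> p \<otimes> q \<in> P"
  and one_notin_cone: "\<one> \<notin> P"
  using positive_cone unfolding positive_cone_def by auto

lemma cone_cases:
  assumes "x \<in> carrier G" "x \<noteq> \<one>"
  shows "x \<in> P \<or> inv x \<in> P"
proof -
  have "x \<in> P \<or> x \<in> m_inv G ` P"
    using positive_cone assms unfolding positive_cone_def by blast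
  then show ?thesis
    using cone_closed by auto
qed

lemma cone_less_irrefl: "x \<in> carrier G \<Longrightarrow> \<not> x <\<^sub>P x"
  unfolding cone_less_def using one_notin_cone by simp

lemma cone_less_trans:
  assumes "x \<in> carrier G" "y \<in> carrier G" "z \<in> carrier G" "x <\<^sub>P y" "y <\<^sub>P z"
  shows "x <\<^sub>P z"
proof -
  have "(inv x \<otimes> y) \<otimes> (inv y \<otimes> z) \<in> P"
    using assms(4,5) cone_mult unfolding cone_less_def by blast
  moreover have "(inv x \<otimes> y) \<otimes> (inv y \<otimes> z) = inv x \<otimes> z"
    using assms(1-3) by (simp add: m_assoc[symmetric]) (simp add: m_assoc)
  ultimately show ?thesis
    unfolding cone_less_def by simp
qed

lemma cone_less_total:
  assumes "x \<in> carrier G" "y \<in> carrier G" "x \<noteq> y"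
  shows "x <\<^sub>P y \<or> y <\<^sub>P x"
proof -
  have "inv x \<otimes> y \<noteq> \<one>"
    using assms inv_solve_left[of \<one> x y] by auto
  then have "inv x \<otimes> y \<in> P \<or> inv (inv x \<otimes> y) \<in> P"
    using assms cone_cases by simp
  then show ?thesis
    using assms unfolding cone_less_def by (auto simp: inv_mult_group)
qed

lemma cone_less_mult_left_iff:
  assumes "g \<in> carrier G" "x \<in> carrier G" "y \<in> carrier G"
  shows "g \<otimes> x <\<^sub>P g \<otimes> y \<longleftrightarrow> x <\<^sub>P y"
proof -
  have "inv (g \<otimes> x) \<otimes> (g \<otimes> y) = inv x \<otimes> y"
    using assms by (simp add: inv_mult_group m_assoc) (simp add: m_assoc[symmetric])
  then show ?thesis
    unfolding cone_less_def by simp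
qed

lemma cone_less_mult_cone: "x \<in> carrier G \<Longrightarrow> p \<in> P \<Longrightarrow> x <\<^sub>P x \<otimes> p"
  unfolding cone_less_def using cone_closed by (auto simp: m_assoc[symmetric])

lemma finite_bounded_above:
  assumes "finite F" "F \<subseteq> carrier G" "P \<noteq> {}"
  shows "\<exists>d\<in>carrier G. \<forall>x\<in>F. x <\<^sub>P d"
  using assms(1,2)
proof (induction F rule: finite_induct)
  case empty
  then show ?case
    by blast
next
  case (insert x F)
  then obtain d where d: "d \<in> carrier G" "\<forall>y\<in>F. y <\<^sub>P d"
    by auto
  have x: "x \<in> carrier G"
    using insert.prems by simp
  obtain p where p: "p \<in> P"
    using assms(3) by blast
  then have xp: "x \<otimes> p \<in> carrier G" "x <\<^sub>P x \<otimes> p"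
    using x cone_closed cone_less_mult_cone by auto
  show ?case
  proof (cases "x <\<^sub>P d")
    case True
    then show ?thesis
      using d by blast
  next
    case False
    then have "d <\<^sub>P x \<otimes> p"
      using cone_less_total[OF x d(1)] cone_less_trans[OF d(1) x xp(1)] xp(2) by blast
    then have "\<forall>y\<in>insert x F. y <\<^sub>P x \<otimes> p"
      using d insert.prems cone_less_trans[OF _ d(1) xp(1)] xp(2) by blast
    then show ?thesis
      using xp(1) by blast
  qed
qed

lemma cone_nat_pow: "p \<in> P \<Longrightarrow> p [^] Suc n \<in> P"
proof (induction n)
  case 0
  then show ?case
    using cone_closed by auto
next
  case (Suc n)
  then show ?case
    using cone_mult nat_pow_Suc[of p "Suc n"] by metis
qed

lemma torsion_free:
  assumes "x \<in> carrier G" "x \<noteq> \<one>"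
  shows "x [^] Suc n \<noteq> \<one>"
  using cone_cases[OF assms] cone_nat_pow one_notin_cone assms(1)
  by (metis inv_one nat_pow_inv)

end

section \<open>Negative swamps\<close>

locale free_product_cone = free_product_word_metric G A B Xg + positive_cone_group G P
  for G :: "'a monoid" (structure) and A B Xg P +
  assumes A_nontrivial: "A \<noteq> {\<one>}" and B_nontrivial: "B \<noteq> {\<one>}"
begin

lemma factor_nontrivial: "\<exists>e\<in>factor f. e \<noteq> \<one>"
  using A_nontrivial B_nontrivial subgroup.one_closed[OF subgroup_A] subgroup.one_closed[OF subgroup_B]
  by (cases f) (auto simp: factor_def)

lemma cone_nonempty: "P \<noteq> {}"
proof -
  obtain e where "e \<in> factor True" "e \<noteq> \<one>"
    using factor_nontrivial by blast
  then show ?thesis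
    using cone_cases factor_closed by blast
qed

lemma starts_in_unbounded:
  assumes m: "m \<in> carrier G"
  shows "\<exists>x\<in>starts_in f. m <\<^sub>P x"
proof -
  obtain e where e: "e \<in> factor f" "e \<noteq> \<one>"
    using factor_nontrivial by blast
  have e_closed: "e \<in> carrier G"
    using e(1) by (rule factor_closed)
  obtain z where z: "z \<in> carrier G" "\<forall>y\<in>{m, inv e \<otimes> m, \<one>}. y <\<^sub>P z"
    using finite_bounded_above[of "{m, inv e \<otimes> m, \<one>}"] m e_closed cone_nonempty by auto
  then have "z \<noteq> \<one>"
    using cone_less_irrefl by auto
  then obtain g where g: "z \<in> starts_in g"
    using nontrivial_starts_in z(1) by blast
  show ?thesis
  proof (cases "g = f")
    case True
    then show ?thesis
      using g z by blast
  next
    case False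
    then have "e \<otimes> z \<in> starts_in f"
      using starts_in_mult_left[OF _ e] g by (cases f) auto
    moreover have "m <\<^sub>P e \<otimes> z"
      using cone_less_mult_left_iff[of e "inv e \<otimes> m" z] z e_closed m by (simp add: m_assoc[symmetric])
    ultimately show ?thesis
      by blast
  qed
qed

lemma word_ball_negative:
  assumes d: "d \<in> carrier G" and above: "\<forall>k\<in>carrier G. len k \<le> R \<longrightarrow> k <\<^sub>P d"
  shows "word_ball (inv d) R \<subseteq> m_inv G ` P"
proof
  fix z
  assume "z \<in> word_ball (inv d) R"
  then have z: "z \<in> carrier G" and "len (inv z \<otimes> inv d) \<le> R"
    unfolding word_ball_def word_dist_def by auto
  then have "len (d \<otimes> z) \<le> R"
    using d word_length_inv[of "d \<otimes> z"] by (simp add: inv_mult_group)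
  then have "d \<otimes> z <\<^sub>P d"
    using above d z by simp
  then have "inv z \<in> P"
    using d z unfolding cone_less_def by (simp add: inv_mult_group m_assoc)
  then show "z \<in> m_inv G ` P"
    using z by (intro image_eqI[of z _ "inv z"]) auto
qed

lemma coset_within_starts_in_exists:
  assumes Y: "Y \<subseteq> carrier G" "\<forall>y\<in>Y. len y \<le> R"
    and x0: "x0 \<in> carrier G" "\<And>n. x0 [^] Suc n \<notin> generate G Y"
  shows "\<exists>g\<in>carrier G. g <# generate G Y \<subseteq> starts_in f"
proof -
  let ?H = "generate G Y"
  have H: "subgroup ?H G"
    using generate_is_subgroup[OF Y(1)] .
  obtain x where x: "x \<in> carrier G" "(x <# ?H) \<inter> word_ball \<one> R = {}"
    using coset_avoiding_finite_set[OF H finite_word_ball x0] by blast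
  then obtain g where g: "x <# ?H \<subseteq> starts_in g"
    using coset_within_starts_in[OF Y] by blast
  show ?thesis
  proof (cases "g = f")
    case True
    then show ?thesis
      using x g by blast
  next
    case False
    obtain e where e: "e \<in> factor f" "e \<noteq> \<one>"
      using factor_nontrivial by blast
    have e_closed: "e \<in> carrier G"
      using e(1) by (rule factor_closed)
    have "(e \<otimes> x) <# ?H = e <# (x <# ?H)"
      using lcos_m_assoc[OF subgroup.subset[OF H] e_closed x(1)] by simp
    also have "\<dots> \<subseteq> starts_in f"
      using g starts_in_mult_left[OF _ e] False unfolding l_coset_def by (cases f) auto
    finally show ?thesis
      using e_closed x(1) by blast
  qed
qed

lemma negative_swamp_exists:
  assumes Y: "Y \<subseteq> carrier G" "\<forall>y\<in>Y. len y \<le> R0"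
    and x0: "x0 \<in> carrier G" "\<And>n. x0 [^] Suc n \<notin> generate G Y"
  shows "\<exists>S. negative_swamp G Xg P (generate G Y) r S"
proof -
  let ?H = "generate G Y"
  define R where "R = max r R0"
  have "r \<le> R" "\<forall>y\<in>Y. len y \<le> R"
    using Y(2) by (auto simp: R_def)
  obtain d where d: "d \<in> carrier G" "\<forall>k\<in>{k \<in> carrier G. len k \<le> R}. k <\<^sub>P d"
    using finite_bounded_above[OF finite_length_le _ cone_nonempty] by blast
  define c where "c = inv d"
  have c: "c \<in> carrier G"
    using d(1) by (simp add: c_def)
  have negative: "word_ball c R \<subseteq> m_inv G ` P"
    unfolding c_def using word_ball_negative d by blast
  obtain u v where u: "u \<in> starts_in True" "d <\<^sub>P u" and v: "v \<in> starts_in False" "d <\<^sub>P v"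
    using starts_in_unbounded[OF d(1)] by blast
  have "inv c \<otimes> (c \<otimes> u) \<in> starts_in True" "inv c \<otimes> (c \<otimes> v) \<notin> starts_in True"
    using u(1) v(1) c starts_in_closed by (auto simp: m_assoc[symmetric] dest: starts_in_unique)
  then have "r_disconnects G Xg r (word_ball c R) {c \<otimes> u} {c \<otimes> v}"
    using word_ball_r_disconnects[OF c \<open>r \<le> R\<close>] by simp
  moreover have "c \<otimes> u \<in> P" "c \<otimes> v \<in> P"
    using u(2) v(2) by (simp_all add: c_def cone_less_def)
  ultimately have "r_disconnects_cone G Xg r (word_ball c R) P"
    unfolding r_disconnects_cone_def by blast
  obtain g1 g2 where g: "g1 \<in> carrier G" "g1 <# ?H \<subseteq> starts_in True"
    "g2 \<in> carrier G" "g2 <# ?H \<subseteq> starts_in False"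
    using coset_within_starts_in_exists[OF Y(1) \<open>\<forall>y\<in>Y. len y \<le> R\<close> x0] by meson
  have "\<forall>x\<in>(c \<otimes> g1) <# ?H. inv c \<otimes> x \<in> starts_in True"
    and "\<forall>x\<in>(c \<otimes> g2) <# ?H. inv c \<otimes> x \<notin> starts_in True"
    using l_coset_translate_back[OF c] g generate_incl[OF Y(1)] starts_in_unique by blast+
  then have "r_disconnects G Xg r (word_ball c R) ((c \<otimes> g1) <# ?H) ((c \<otimes> g2) <# ?H)"
    using word_ball_r_disconnects[OF c \<open>r \<le> R\<close>] by blast
  then show ?thesis
    unfolding negative_swamp_def
    using negative \<open>r_disconnects_cone G Xg r (word_ball c R) P\<close> c g(1,3) by (meson m_closed)
qed

lemma negative_swamp_factor:
  assumes "Y \<subseteq> Xg" "generate G Y = factor f"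
  shows "\<exists>S. negative_swamp G Xg P (factor f) r S"
proof -
  obtain x0 where x0: "x0 \<in> factor (\<not> f)" "x0 \<noteq> \<one>"
    using factor_nontrivial by blast
  have x0_closed: "x0 \<in> carrier G"
    using x0(1) by (rule factor_closed)
  have "x0 [^] Suc n \<notin> generate G Y" for n
  proof
    assume "x0 [^] Suc n \<in> generate G Y"
    moreover have "x0 [^] Suc n \<in> factor (\<not> f)"
      using subgroup_nat_pow_closed[OF subgroup_factor x0(1)] .
    ultimately have "x0 [^] Suc n \<in> A \<inter> B"
      using assms(2) by (cases f) (auto simp: factor_def)
    then show False
      using factors_inter torsion_free[OF x0_closed x0(2)] by blast
  qed
  moreover have "\<forall>y\<in>Y. len y \<le> 1"
    using assms(1) word_length_letter by blast
  ultimately show ?thesis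
    using negative_swamp_exists[of Y 1 x0] assms Xg_closed x0_closed by auto
qed

lemma cyclic_subgroup_misses_powers:
  assumes g: "g \<in> carrier G"
  shows "\<exists>x0\<in>carrier G. \<forall>n. x0 [^] Suc n \<notin> generate G {g}"
proof (rule ccontr)
  assume "\<not> ?thesis"
  then have powers: "\<exists>n k. x [^] Suc n = g [^] (k::int)" if "x \<in> carrier G" for x
    using that generate_pow[OF g] by blast
  obtain a b where a: "a \<in> A" "a \<noteq> \<one>" and b: "b \<in> B" "b \<noteq> \<one>"
    using factor_nontrivial[of True] factor_nontrivial[of False] by (auto simp: factor_def)
  have closed: "a \<in> carrier G" "b \<in> carrier G"
    using a(1) b(1) subgroup.mem_carrier[OF subgroup_A] subgroup.mem_carrier[OF subgroup_B] by auto
  obtain n m k l where kl: "a [^] Suc n = g [^] (k::int)" "b [^] Suc m = g [^] (l::int)"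
    using powers closed by meson
  have "g [^] k \<otimes> g [^] l = g [^] l \<otimes> g [^] k"
    using int_pow_mult[OF g, of k l] int_pow_mult[OF g, of l k] by (simp add: add.commute)
  then have "a [^] Suc n \<otimes> b [^] Suc m = b [^] Suc m \<otimes> a [^] Suc n"
    unfolding kl .
  moreover have "a [^] Suc n \<in> A" "b [^] Suc m \<in> B"
    using subgroup_nat_pow_closed[OF subgroup_A a(1)] subgroup_nat_pow_closed[OF subgroup_B b(1)]
    by blast+
  moreover have "a [^] Suc n \<noteq> \<one>" "b [^] Suc m \<noteq> \<one>"
    using torsion_free closed a(2) b(2) by auto
  ultimately show False
    using factor_elements_not_commute by blast
qed

lemma negative_swamp_cyclic:
  assumes "g \<in> carrier G"
  shows "\<exists>S. negative_swamp G Xg P (generate G {g}) r S"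
  using cyclic_subgroup_misses_powers[OF assms] negative_swamp_exists[of "{g}" "len g"] assms
  by blast

end

theorem corollary5p10:
  fixes G :: "'a monoid" and A B :: "'a set"
  assumes "group G"
    and "internal_free_product G A B"
    and "A \<noteq> {\<one>\<^bsub>G\<^esub>}" and "B \<noteq> {\<one>\<^bsub>G\<^esub>}"
    and "finitely_generated (G\<lparr>carrier := A\<rparr>)" and "finitely_generated (G\<lparr>carrier := B\<rparr>)"
    and "left_orderable (G\<lparr>carrier := A\<rparr>)" and "left_orderable (G\<lparr>carrier := B\<rparr>)"
  shows "hucha G ({A, B} \<union> {generate G {g} | g. g \<in> carrier G})"
proof -
  interpret free_product_group G A B
    using assms(1,2) by (intro free_product_group.intro free_product_group_axioms.intro)
  obtain XA XB where XA: "finite XA" "XA \<subseteq> A" "generate G XA = A"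
    and XB: "finite XB" "XB \<subseteq> B" "generate G XB = B"
    using assms(5,6) generate_consistent[OF _ subgroup_A] generate_consistent[OF _ subgroup_B]
    unfolding finitely_generated_def by force
  define Xg where "Xg = XA \<union> XB"
  interpret free_product_word_metric G A B Xg
    using XA XB generate_factor_generators subgroup.subset[OF subgroup_A] subgroup.subset[OF subgroup_B]
    by unfold_locales (auto simp: Xg_def)
  show ?thesis
    unfolding hucha_def
  proof (rule exI[of _ Xg], intro conjI allI impI ballI finite_Xg Xg_closed generate_Xg)
    fix P H and r :: nat
    assume "positive_cone G P" "H \<in> {A, B} \<union> {generate G {g} | g. g \<in> carrier G}" "r > 0"
    interpret free_product_cone G A B Xg P
      using \<open>positive_cone G P\<close> assms(3,4) by unfold_locales
    show "\<exists>S. negative_swamp G Xg P H r S"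
      using \<open>H \<in> _\<close> negative_swamp_factor[of XA True r] negative_swamp_factor[of XB False r]
        negative_swamp_cyclic XA XB by (auto simp: Xg_def factor_def)
  qed
qed

end
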